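(* Let $\chi$ and $\tau$ be fixed positive integers. For each $n$ let $G$ be an $n$-vertex graph and $\Sigma\subseteq V(G)$ with $|\Sigma|=n-o(n)$, such that for every pair of vertices $u,v\in\Sigma$ there is a $(u,v)$-path $u=u_0,u_1,\dots,u_{l-1},u_l=v$ with $l\le\chi$ and $\min\{\deg(u_i),\deg(u_{i+1})\}\le\tau$ for every $0\le i\le l-1$. If a uniformly random vertex of $G$ knows a rumor, then with probability $1-o(1)$ after $6\tau(\chi+\log n)$ rounds of the Push-Pull protocol at least $n-o(n)$ vertices know the rumor.
   Context: Push-Pull protocol: in synchronous rounds, every informed vertex contacts a uniformly random neighbor and sends it the rumor, and every uninformed vertex contacts a uniformly random neighbor and receives the rumor if that neighbor knows it; all random choices are independent, and a vertex informed in a round cannot forward the rumor in that same round. *)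

theory Defs
  imports "HOL-Probability.Probability" "HOL-Library.Landau_Symbols"
begin

definition is_graph :: "nat \<Rightarrow> (nat \<Rightarrow> nat \<Rightarrow> bool) \<Rightarrow> bool" where
  "is_graph n E \<longleftrightarrow> (\<forall>u v. E u v \<longrightarrow> u < n \<and> v < n \<and> u \<noteq> v \<and> E v u)"

definition nbrs :: "nat \<Rightarrow> (nat \<Rightarrow> nat \<Rightarrow> bool) \<Rightarrow> nat \<Rightarrow> nat set" where
  "nbrs n E v = {u. u < n \<and> E v u}"

definition deg :: "nat \<Rightarrow> (nat \<Rightarrow> nat \<Rightarrow> bool) \<Rightarrow> nat \<Rightarrow> nat" where
  "deg n E v = card (nbrs n E v)"

text \<open>A (u,v)-path u = p!0, ..., p!l = v of length l = length p - 1.\<close>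
definition is_path :: "(nat \<Rightarrow> nat \<Rightarrow> bool) \<Rightarrow> nat list \<Rightarrow> nat \<Rightarrow> nat \<Rightarrow> bool" where
  "is_path E p u v \<longleftrightarrow> p \<noteq> [] \<and> hd p = u \<and> last p = v \<and> distinct p \<and>
     (\<forall>i. Suc i < length p \<longrightarrow> E (p ! i) (p ! Suc i))"

definition contact :: "nat \<Rightarrow> (nat \<Rightarrow> nat \<Rightarrow> bool) \<Rightarrow> nat \<Rightarrow> nat option pmf" where
  "contact n E v = (if nbrs n E v = {} then return_pmf None
                    else map_pmf Some (pmf_of_set (nbrs n E v)))"

text \<open>One synchronous Push-Pull round from informed set I. Transmission uses only the
  informed set at the start of the round.\<close>
definition pp_update :: "nat \<Rightarrow> nat set \<Rightarrow> (nat \<Rightarrow> nat option) \<Rightarrow> nat set" where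
  "pp_update n I c = I
     \<union> {v. v < n \<and> v \<notin> I \<and> (\<exists>u. c v = Some u \<and> u \<in> I)}
     \<union> {u. \<exists>v\<in>I. c v = Some u}"

definition pp_round :: "nat \<Rightarrow> (nat \<Rightarrow> nat \<Rightarrow> bool) \<Rightarrow> nat set \<Rightarrow> nat set pmf" where
  "pp_round n E I = map_pmf (pp_update n I) (Pi_pmf {0..<n} None (contact n E))"

fun pp_rounds :: "nat \<Rightarrow> (nat \<Rightarrow> nat \<Rightarrow> bool) \<Rightarrow> nat \<Rightarrow> nat set \<Rightarrow> nat set pmf" where
  "pp_rounds n E 0 I = return_pmf I"
| "pp_rounds n E (Suc k) I = bind_pmf (pp_rounds n E k I) (pp_round n E)"

definition pp_from_random :: "nat \<Rightarrow> (nat \<Rightarrow> nat \<Rightarrow> bool) \<Rightarrow> nat \<Rightarrow> nat set pmf" where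
  "pp_from_random n E k = bind_pmf (pmf_of_set {0..<n}) (\<lambda>s. pp_rounds n E k {s})"

end

theory Submission imports Defs begin

text \<open>Along an edge with an endpoint of degree at most tau the rumour crosses in each round with
  probability at least 1/tau. Splitting the T rounds into chi blocks of m = T div chi rounds, one
  block per edge of a short path, a union bound shows that a vertex of Sigma stays uninformed from
  a source in Sigma with probability at most eps = chi (1 - 1/tau)^m, and m tends to infinity since
  T grows like log n. By Markov's inequality, except with probability sqrt eps at most n sqrt eps
  vertices of Sigma stay uninformed; and the source lies in Sigma with probability |Sigma|/n,
  which tends to 1.\<close>

lemma measure_pmf_prob_bind_pmf:
  "measure_pmf.prob (bind_pmf M N) X = measure_pmf.expectation M (\<lambda>x. measure_pmf.prob (N x) X)"
  unfolding measure_pmf_bind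
  by (rule measure_pmf.measure_bind[where N="count_space UNIV"])
     (auto simp: space_subprob_algebra measure_pmf.subprob_space_axioms)

lemma measure_pmf_prob_bind_pmf_le:
  assumes "\<And>x. x \<in> set_pmf M \<Longrightarrow> measure_pmf.prob (N x) X \<le> b + c * indicator A x"
  shows "measure_pmf.prob (bind_pmf M N) X \<le> b + c * measure_pmf.prob M A"
proof -
  have "measure_pmf.prob (bind_pmf M N) X = measure_pmf.expectation M (\<lambda>x. measure_pmf.prob (N x) X)"
    by (rule measure_pmf_prob_bind_pmf)
  also have "\<dots> \<le> measure_pmf.expectation M (\<lambda>x. b + c * indicator A x)"
  proof (rule integral_mono_AE)
    show "integrable (measure_pmf M) (\<lambda>x. measure_pmf.prob (N x) X)"
      by (rule measure_pmf.integrable_const_bound[where B=1]) auto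
    show "integrable (measure_pmf M) (\<lambda>x. b + c * indicator A x)"
      by (rule measure_pmf.integrable_const_bound[where B="\<bar>b\<bar> + \<bar>c\<bar>"])
         (auto simp: indicator_def)
    show "AE x in measure_pmf M. measure_pmf.prob (N x) X \<le> b + c * indicator A x"
      using assms by (simp add: AE_measure_pmf_iff)
  qed
  also have "\<dots> = b + c * measure_pmf.prob M A"
    by (subst Bochner_Integration.integral_add)
       (auto intro: measure_pmf.integrable_const_bound[where B=1])
  finally show ?thesis .
qed

lemma pp_rounds_add:
  "pp_rounds n E (k + r) I = bind_pmf (pp_rounds n E k I) (pp_rounds n E r)"
  by (induction r) (simp_all add: bind_return_pmf' bind_assoc_pmf)

lemma set_pmf_pp_round_superset: "J \<in> set_pmf (pp_round n E I) \<Longrightarrow> I \<subseteq> J"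
  unfolding pp_round_def pp_update_def by auto

lemma set_pmf_pp_rounds_superset: "J \<in> set_pmf (pp_rounds n E k I) \<Longrightarrow> I \<subseteq> J"
  by (induction k arbitrary: J) (auto dest!: set_pmf_pp_round_superset)

lemma prob_pp_round_uninformed_eq_0:
  "v \<in> I \<Longrightarrow> measure_pmf.prob (pp_round n E I) {J. v \<notin> J} = 0"
  by (subst measure_pmf_zero_iff) (blast dest: set_pmf_pp_round_superset)

lemma prob_pp_rounds_uninformed_eq_0:
  "v \<in> I \<Longrightarrow> measure_pmf.prob (pp_rounds n E k I) {J. v \<notin> J} = 0"
  by (subst measure_pmf_zero_iff) (blast dest: set_pmf_pp_rounds_superset)

lemma prob_pp_rounds_uninformed_antimono:
  assumes "k \<le> k'"
  shows "measure_pmf.prob (pp_rounds n E k' I) {J. v \<notin> J}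
           \<le> measure_pmf.prob (pp_rounds n E k I) {J. v \<notin> J}"
proof -
  obtain r where r: "k' = k + r" using assms le_Suc_ex by blast
  have "measure_pmf.prob (pp_rounds n E k' I) {J. v \<notin> J}
      \<le> 0 + 1 * measure_pmf.prob (pp_rounds n E k I) {J. v \<notin> J}"
    unfolding r pp_rounds_add
    by (intro measure_pmf_prob_bind_pmf_le)
       (auto simp: prob_pp_rounds_uninformed_eq_0 indicator_def)
  then show ?thesis by simp
qed

lemma set_pmf_pp_round_subset:
  assumes "I \<subseteq> {0..<n}" and "J \<in> set_pmf (pp_round n E I)"
  shows "J \<subseteq> {0..<n}"
proof
  obtain c where c: "c \<in> set_pmf (Pi_pmf {0..<n} None (contact n E))" and J: "J = pp_update n I c"
    using assms(2) unfolding pp_round_def by auto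
  have contacts: "c x \<in> set_pmf (contact n E x)" if "x < n" for x
    using c that by (auto simp: set_Pi_pmf PiE_dflt_def)
  fix u assume "u \<in> J"
  then consider "u \<in> I" | "u < n" | v where "v \<in> I" "c v = Some u"
    unfolding J pp_update_def by blast
  then show "u \<in> {0..<n}"
  proof cases
    case 3
    then show ?thesis
      using assms(1) contacts[of v]
      by (auto simp: contact_def nbrs_def split: if_splits)
  qed (use assms(1) in auto)
qed

lemma set_pmf_pp_rounds_subset:
  "I \<subseteq> {0..<n} \<Longrightarrow> J \<in> set_pmf (pp_rounds n E k I) \<Longrightarrow> J \<subseteq> {0..<n}"
proof (induction k arbitrary: J)
  case (Suc k)
  then obtain K where "K \<in> set_pmf (pp_rounds n E k I)" "J \<in> set_pmf (pp_round n E K)" by auto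
  then show ?case using Suc set_pmf_pp_round_subset by blast
qed simp

section \<open>Crossing an edge with a low-degree endpoint\<close>

lemma prob_contact_eq:
  assumes "w < n" "w' < n" "E w w'"
  shows "measure_pmf.prob (Pi_pmf {0..<n} None (contact n E)) {c. c w = Some w'}
           = 1 / real (deg n E w)"
proof -
  have w': "w' \<in> nbrs n E w" and fin: "finite (nbrs n E w)" and ne: "nbrs n E w \<noteq> {}"
    using assms by (auto simp: nbrs_def)
  have "measure_pmf.prob (Pi_pmf {0..<n} None (contact n E)) {c. c w = Some w'}
      = measure_pmf.prob (map_pmf (\<lambda>c. c w) (Pi_pmf {0..<n} None (contact n E))) {Some w'}"
    by (simp add: vimage_def)
  also have "\<dots> = pmf (pmf_of_set (nbrs n E w)) w'"
    using assms w' by (auto simp: Pi_pmf_component contact_def measure_pmf_single pmf_map_inj')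
  also have "\<dots> = 1 / real (deg n E w)"
    using w' fin ne by (simp add: deg_def)
  finally show ?thesis .
qed

text \<open>If the endpoint of degree at most \<open>\<tau>\<close> is informed it pushes along the edge, otherwise it
  pulls along it; either way the rumour crosses with probability at least \<open>1/\<tau>\<close>.\<close>
lemma prob_pp_round_edge_uninformed_le:
  assumes "is_graph n E" and "a \<in> I" and "E a b"
    and "min (deg n E a) (deg n E b) \<le> tau"
  shows "measure_pmf.prob (pp_round n E I) {J. b \<notin> J} \<le> 1 - 1 / real tau"
proof -
  have ab: "a < n" "b < n" "E b a" using assms(1,3) by (auto simp: is_graph_def)
  obtain w w' where ww: "w < n" "w' < n" "E w w'" "deg n E w \<le> tau"
      and crossed: "{c. b \<notin> pp_update n I c} \<subseteq> {c. c w \<noteq> Some w'}"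
  proof (cases "deg n E a \<le> tau")
    case True
    show ?thesis by (rule that[of a b]) (use ab assms True in \<open>auto simp: pp_update_def\<close>)
  next
    case False
    then have "deg n E b \<le> tau" using assms(4) by simp
    show ?thesis
      by (rule that[of b a]) (use ab assms \<open>deg n E b \<le> tau\<close> in \<open>auto simp: pp_update_def\<close>)
  qed
  have "deg n E w > 0"
    using ww by (auto simp: deg_def nbrs_def card_gt_0_iff)
  have "measure_pmf.prob (pp_round n E I) {J. b \<notin> J}
      = measure_pmf.prob (Pi_pmf {0..<n} None (contact n E)) {c. b \<notin> pp_update n I c}"
    by (simp add: pp_round_def vimage_def)
  also have "\<dots> \<le> measure_pmf.prob (Pi_pmf {0..<n} None (contact n E)) {c. c w \<noteq> Some w'}"
    by (rule measure_pmf.finite_measure_mono[OF crossed]) simp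
  also have "\<dots> = 1 - measure_pmf.prob (Pi_pmf {0..<n} None (contact n E)) {c. c w = Some w'}"
    by (subst measure_pmf.prob_compl[symmetric])
       (auto intro!: arg_cong[where f="measure_pmf.prob _"])
  also have "\<dots> = 1 - 1 / real (deg n E w)"
    using prob_contact_eq ww by simp
  also have "\<dots> \<le> 1 - 1 / real tau"
    using ww \<open>deg n E w > 0\<close> by (simp add: frac_le)
  finally show ?thesis .
qed

lemma prob_pp_rounds_edge_uninformed_le:
  assumes "is_graph n E" and "a \<in> I" and "E a b"
    and "min (deg n E a) (deg n E b) \<le> tau" and "tau > 0"
  shows "measure_pmf.prob (pp_rounds n E m I) {J. b \<notin> J} \<le> (1 - 1 / real tau) ^ m"
proof (induction m)
  case (Suc m)
  have "measure_pmf.prob (pp_rounds n E (Suc m) I) {J. b \<notin> J}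
      \<le> 0 + (1 - 1 / real tau) * measure_pmf.prob (pp_rounds n E m I) {J. b \<notin> J}"
    unfolding pp_rounds.simps
  proof (rule measure_pmf_prob_bind_pmf_le)
    fix J assume "J \<in> set_pmf (pp_rounds n E m I)"
    then have "a \<in> J" using assms(2) by (auto dest: set_pmf_pp_rounds_superset)
    then show "measure_pmf.prob (pp_round n E J) {J. b \<notin> J}
               \<le> 0 + (1 - 1 / real tau) * indicator {J. b \<notin> J} J"
      using prob_pp_round_edge_uninformed_le[OF assms(1) _ assms(3,4)]
      by (cases "b \<in> J") (auto simp: prob_pp_round_uninformed_eq_0)
  qed
  also have "\<dots> \<le> (1 - 1 / real tau) * (1 - 1 / real tau) ^ m"
    using Suc assms(5) by (simp add: mult_left_mono)
  finally show ?case by simp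
qed simp

section \<open>Walks through low-degree vertices\<close>

definition low_deg_walk :: "nat \<Rightarrow> (nat \<Rightarrow> nat \<Rightarrow> bool) \<Rightarrow> nat \<Rightarrow> nat list \<Rightarrow> bool" where
  "low_deg_walk n E tau p \<longleftrightarrow> (\<forall>i. Suc i < length p \<longrightarrow>
     E (p ! i) (p ! Suc i) \<and> min (deg n E (p ! i)) (deg n E (p ! Suc i)) \<le> tau)"

lemma low_deg_walk_Cons_Cons:
  "low_deg_walk n E tau (x # y # ys) \<longleftrightarrow>
     E x y \<and> min (deg n E x) (deg n E y) \<le> tau \<and> low_deg_walk n E tau (y # ys)"
  unfolding low_deg_walk_def by (auto simp: less_Suc_eq_0_disj)

lemma prob_pp_rounds_walk_uninformed_le:
  assumes "is_graph n E" and "tau > 0"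
  shows "p \<noteq> [] \<Longrightarrow> hd p \<in> I \<Longrightarrow> low_deg_walk n E tau p \<Longrightarrow>
    measure_pmf.prob (pp_rounds n E (m * (length p - 1)) I) {J. last p \<notin> J}
      \<le> real (length p - 1) * (1 - 1 / real tau) ^ m"
proof (induction p arbitrary: I rule: induct_list012)
  case (3 x y ys)
  let ?q = "(1 - 1 / real tau) ^ m"
  have walk: "E x y" "min (deg n E x) (deg n E y) \<le> tau" "low_deg_walk n E tau (y # ys)"
    using "3.prems"(3) by (simp_all add: low_deg_walk_Cons_Cons)
  have "measure_pmf.prob (pp_rounds n E (m + m * length ys) I) {J. last (y # ys) \<notin> J}
      \<le> real (length ys) * ?q + 1 * measure_pmf.prob (pp_rounds n E m I) {J. y \<notin> J}"
    unfolding pp_rounds_add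
  proof (rule measure_pmf_prob_bind_pmf_le)
    fix J
    show "measure_pmf.prob (pp_rounds n E (m * length ys) J) {J. last (y # ys) \<notin> J}
          \<le> real (length ys) * ?q + 1 * indicator {J. y \<notin> J} J"
    proof (cases "y \<in> J")
      case True
      then show ?thesis using "3.IH"(2)[of J] walk(3) by simp
    next
      case False
      have "0 \<le> real (length ys) * ?q" using assms(2) by simp
      then show ?thesis using False by (simp add: add_increasing)
    qed
  qed
  also have "\<dots> \<le> real (length ys) * ?q + ?q"
    using prob_pp_rounds_edge_uninformed_le[OF assms(1) _ walk(1,2) assms(2)] "3.prems"(2)
    by simp
  finally show ?case by (simp add: algebra_simps)
qed (auto simp: prob_pp_rounds_uninformed_eq_0)

section \<open>From single vertices to the number of informed vertices\<close>

lemma expectation_card_Diff: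
  fixes P :: "'a set pmf"
  assumes "finite S"
  shows "measure_pmf.expectation P (\<lambda>J. real (card (S - J))) = (\<Sum>v\<in>S. measure_pmf.prob P {J. v \<notin> J})"
proof -
  have "real (card (S - J)) = (\<Sum>v\<in>S. indicator {J. v \<notin> J} J)" for J
    using assms by (simp add: indicator_def sum.If_cases Int_def set_diff_eq)
  then show ?thesis
    by (simp add: Bochner_Integration.integral_sum[OF measure_pmf.integrable_const_bound[where B=1]])
qed

lemma prob_card_Int_gt_Markov:
  fixes P :: "'a set pmf"
  assumes "finite S" and "r > 0"
    and "\<And>v. v \<in> S \<Longrightarrow> measure_pmf.prob P {J. v \<notin> J} \<le> eps"
  shows "measure_pmf.prob P {J. real (card S) - r < real (card (S \<inter> J))}
           \<ge> 1 - real (card S) * eps / r"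
proof -
  let ?X = "\<lambda>J. real (card (S - J))"
  have "integrable (measure_pmf P) ?X"
    by (rule measure_pmf.integrable_const_bound[where B="real (card S)"])
       (auto intro!: card_mono \<open>finite S\<close>)
  then have "measure_pmf.prob P {J. r \<le> ?X J} \<le> measure_pmf.expectation P ?X / r"
    using integral_Markov_inequality_measure[of "measure_pmf P" ?X UNIV r] \<open>r > 0\<close> by simp
  also have "\<dots> \<le> real (card S) * eps / r"
    using assms by (intro divide_right_mono) (simp_all add: expectation_card_Diff sum_bounded_above)
  finally have "measure_pmf.prob P {J. r \<le> ?X J} \<le> real (card S) * eps / r" .
  moreover have "real (card S) - r < real (card (S \<inter> J)) \<longleftrightarrow> \<not> r \<le> ?X J" for J
  proof -
    have "real (card S) = real (card (S \<inter> J)) + ?X J"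
      using card_Int_Diff[OF \<open>finite S\<close>] by (metis of_nat_add)
    then show ?thesis by linarith
  qed
  then have "{J. real (card S) - r < real (card (S \<inter> J))} = - {J. r \<le> ?X J}"
    by blast
  moreover have "measure_pmf.prob P (- {J. r \<le> ?X J}) = 1 - measure_pmf.prob P {J. r \<le> ?X J}"
    by (simp add: measure_pmf.prob_compl[symmetric] Compl_eq_Diff_UNIV)
  ultimately show ?thesis
    by simp
qed

lemma prob_pp_rounds_short_walk_uninformed_le:
  assumes "is_graph n E" and "tau > 0"
    and "p \<noteq> []" "hd p \<in> I" "low_deg_walk n E tau p" "length p - 1 \<le> chi"
  shows "measure_pmf.prob (pp_rounds n E T I) {J. last p \<notin> J}
           \<le> real chi * (1 - 1 / real tau) ^ (T div chi)"
proof -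
  have "T div chi * (length p - 1) \<le> T div chi * chi"
    using assms(6) by simp
  also have "\<dots> \<le> T" by simp
  finally have "measure_pmf.prob (pp_rounds n E T I) {J. last p \<notin> J}
      \<le> measure_pmf.prob (pp_rounds n E (T div chi * (length p - 1)) I) {J. last p \<notin> J}"
    by (rule prob_pp_rounds_uninformed_antimono)
  also have "\<dots> \<le> real (length p - 1) * (1 - 1 / real tau) ^ (T div chi)"
    using prob_pp_rounds_walk_uninformed_le[OF assms(1-5)] .
  also have "\<dots> \<le> real chi * (1 - 1 / real tau) ^ (T div chi)"
    using assms(2,6) by (intro mult_right_mono) auto
  finally show ?thesis .
qed

lemma prob_pp_from_random_ge:
  assumes "Sig \<subseteq> {0..<n}" and "n > 0"
    and start: "\<And>s. s \<in> Sig \<Longrightarrow> measure_pmf.prob (pp_rounds n E T {s}) G \<ge> 1 - d"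
  shows "measure_pmf.prob (pp_from_random n E T) G \<ge> real (card Sig) / real n * (1 - d)"
proof -
  let ?f = "\<lambda>s. measure_pmf.prob (pp_rounds n E T {s}) G"
  have "real (card Sig) * (1 - d) = (\<Sum>s\<in>Sig. 1 - d)" by simp
  also have "\<dots> \<le> (\<Sum>s\<in>Sig. ?f s)" using start by (intro sum_mono)
  also have "\<dots> \<le> (\<Sum>s\<in>{0..<n}. ?f s)"
    using assms(1) by (intro sum_mono2) auto
  finally have "real (card Sig) / real n * (1 - d) \<le> (\<Sum>s\<in>{0..<n}. ?f s) / real n"
    by (simp add: divide_right_mono)
  also have "\<dots> = measure_pmf.prob (pp_from_random n E T) G"
    using assms(2) by (simp add: pp_from_random_def measure_pmf_prob_bind_pmf integral_pmf_of_set)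
  finally show ?thesis .
qed

lemma prob_pp_from_random_many_informed_ge:
  assumes "is_graph n E" and "tau > 0" and "Sig \<subseteq> {0..<n}" and "n > 0" and "d > 0"
    and paths: "\<And>u v. u \<in> Sig \<Longrightarrow> v \<in> Sig \<Longrightarrow>
       \<exists>p. is_path E p u v \<and> length p - 1 \<le> chi \<and>
           (\<forall>i. Suc i < length p \<longrightarrow> min (deg n E (p ! i)) (deg n E (p ! Suc i)) \<le> tau)"
    and small: "real chi * (1 - 1 / real tau) ^ (T div chi) \<le> d\<^sup>2"
  shows "measure_pmf.prob (pp_from_random n E T) {I. real (card Sig) - real n * d \<le> real (card I)}
           \<ge> real (card Sig) / real n * (1 - d)"
proof (rule prob_pp_from_random_ge[OF assms(3,4)])
  fix s assume "s \<in> Sig"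
  let ?eps = "real chi * (1 - 1 / real tau) ^ (T div chi)"
  let ?P = "pp_rounds n E T {s}"
  have fin: "finite Sig" and card: "card Sig \<le> n"
    using assms(3) by (auto simp: finite_subset subset_eq_atLeast0_lessThan_card)
  have "real (card Sig) * ?eps / (real n * d) \<le> real n * d\<^sup>2 / (real n * d)"
    using card small assms(2,4,5) by (intro divide_right_mono mult_mono) auto
  then have "1 - d \<le> 1 - real (card Sig) * ?eps / (real n * d)"
    using assms(4) by (simp add: power2_eq_square)
  also have "\<dots> \<le> measure_pmf.prob ?P {J. real (card Sig) - real n * d < real (card (Sig \<inter> J))}"
  proof (rule prob_card_Int_gt_Markov[OF fin])
    fix v assume "v \<in> Sig"
    with \<open>s \<in> Sig\<close> obtain p where "p \<noteq> []" "hd p = s" "last p = v" "length p - 1 \<le> chi"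
        "low_deg_walk n E tau p"
      using paths[of s v] by (auto simp: is_path_def low_deg_walk_def)
    then show "measure_pmf.prob ?P {J. v \<notin> J} \<le> ?eps"
      using prob_pp_rounds_short_walk_uninformed_le[OF assms(1,2)] by fastforce
  qed (use assms(4,5) in simp)
  also have "\<dots> \<le> measure_pmf.prob ?P {J. real (card Sig) - real n * d \<le> real (card J)}"
  proof (rule measure_pmf.finite_measure_mono_AE)
    have "card (Sig \<inter> J) \<le> card J" if "J \<in> set_pmf ?P" for J
    proof -
      have "J \<subseteq> {0..<n}"
        using set_pmf_pp_rounds_subset[OF _ that] \<open>s \<in> Sig\<close> assms(3) by blast
      then show ?thesis by (intro card_mono finite_subset[OF \<open>J \<subseteq> {0..<n}\<close>]) auto
    qed
    then show "AE J in measure_pmf ?P. J \<in> {J. real (card Sig) - real n * d < real (card (Sig \<inter> J))}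
        \<longrightarrow> J \<in> {J. real (card Sig) - real n * d \<le> real (card J)}"
      by (force simp: AE_measure_pmf_iff)
  qed simp
  finally show "1 - d \<le> measure_pmf.prob ?P {J. real (card Sig) - real n * d \<le> real (card J)}" .
qed

section \<open>Asymptotics\<close>

lemma filterlim_div_sequentially:
  fixes f :: "'a \<Rightarrow> nat"
  assumes "filterlim f sequentially F" and "k > 0"
  shows "filterlim (\<lambda>x. f x div k) sequentially F"
  unfolding filterlim_at_top
proof
  fix Z
  from assms(1) have "\<forall>\<^sub>F x in F. Z * k \<le> f x" by (simp add: filterlim_at_top)
  then show "\<forall>\<^sub>F x in F. Z \<le> f x div k"
    by eventually_elim (use assms(2) in \<open>simp add: less_eq_div_iff_mult_less_eq\<close>)
qed

lemma filterlim_nat_ceiling_mult_ln: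
  assumes "a > 0"
  shows "filterlim (\<lambda>n. nat \<lceil>a * (b + ln (real n))\<rceil>) sequentially sequentially"
  unfolding filterlim_sequentially_iff_filterlim_real
proof (rule filterlim_at_top_mono)
  show "filterlim (\<lambda>n. a * (b + ln (real n))) at_top sequentially"
    using assms
    by (intro filterlim_tendsto_pos_mult_at_top[OF tendsto_const] filterlim_tendsto_add_at_top[OF tendsto_const]
              filterlim_compose[OF ln_at_top filterlim_real_sequentially])
  show "\<forall>\<^sub>F n in sequentially. a * (b + ln (real n)) \<le> real (nat \<lceil>a * (b + ln (real n))\<rceil>)"
    by (intro always_eventually allI of_nat_ceiling)
qed

lemma LIMSEQ_divide_of_nat_1:
  fixes f :: "nat \<Rightarrow> real"
  assumes "(\<lambda>n. real n - f n) \<in> o(\<lambda>n. real n)"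
  shows "(\<lambda>n. f n / real n) \<longlonglongrightarrow> 1"
proof (rule Lim_transform_eventually)
  show "(\<lambda>n. 1 - (real n - f n) / real n) \<longlonglongrightarrow> 1"
    using tendsto_diff[OF tendsto_const smalloD_tendsto[OF assms], of 1] by simp
  show "\<forall>\<^sub>F n in sequentially. 1 - (real n - f n) / real n = f n / real n"
    using eventually_gt_at_top[of 0] by eventually_elim (simp add: field_simps)
qed

lemma smallo_of_nat_mult_LIMSEQ_0:
  fixes d :: "nat \<Rightarrow> real"
  assumes "d \<longlonglongrightarrow> 0"
  shows "(\<lambda>n. real n * d n) \<in> o(\<lambda>n. real n)"
proof (rule smalloI_tendsto)
  show "(\<lambda>n. real n * d n / real n) \<longlonglongrightarrow> 0"
    using assms by (rule Lim_transform_eventually)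
       (use eventually_gt_at_top[of 0] in \<open>eventually_elim, simp\<close>)
  show "\<forall>\<^sub>F n in sequentially. real n \<noteq> 0"
    using eventually_gt_at_top[of 0] by eventually_elim simp
qed

lemma pp_from_random_informs_almost_all:
  fixes E :: "nat \<Rightarrow> nat \<Rightarrow> nat \<Rightarrow> bool" and Sig :: "nat \<Rightarrow> nat set" and T :: "nat \<Rightarrow> nat"
  assumes "tau > 0"
    and graph: "\<And>n. is_graph n (E n)"
    and sub: "\<And>n. Sig n \<subseteq> {0..<n}"
    and big: "(\<lambda>n. real n - real (card (Sig n))) \<in> o(\<lambda>n. real n)"
    and paths: "\<And>n u v. u \<in> Sig n \<Longrightarrow> v \<in> Sig n \<Longrightarrow>
       \<exists>p. is_path (E n) p u v \<and> length p - 1 \<le> chi \<and>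
           (\<forall>i. Suc i < length p \<longrightarrow>
              min (deg n (E n) (p ! i)) (deg n (E n) (p ! Suc i)) \<le> tau)"
    and rounds: "filterlim (\<lambda>n. T n div chi) sequentially sequentially"
  shows "\<exists>h :: nat \<Rightarrow> real. h \<in> o(\<lambda>n. real n) \<and>
     (\<lambda>n. measure_pmf.prob (pp_from_random n (E n) (T n)) {I. real (card I) \<ge> real n - h n})
     \<longlonglongrightarrow> 1"
proof -
  define eps where "eps n = real chi * (1 - 1 / real tau) ^ (T n div chi)" for n
  \<comment> \<open>the summand \<open>1 / (n + 1)\<close> only keeps \<open>d n\<close> positive\<close>
  define d where "d n = sqrt (eps n + 1 / real (Suc n))" for n
  define h where "h n = real n - real (card (Sig n)) + real n * d n" for n
  have "d \<longlonglongrightarrow> sqrt (real chi * 0 + 0)"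
    unfolding d_def eps_def using assms(1) rounds
    by (intro tendsto_intros filterlim_compose[OF LIMSEQ_power_zero]
              LIMSEQ_inverse_real_of_nat[unfolded inverse_eq_divide]) auto
  then have d: "d \<longlonglongrightarrow> 0" by simp
  have "(\<lambda>n. measure_pmf.prob (pp_from_random n (E n) (T n)) {I. real (card I) \<ge> real n - h n})
          \<longlonglongrightarrow> 1"
  proof (rule tendsto_sandwich[OF _ _ _ tendsto_const])
    show "\<forall>\<^sub>F n in sequentially. real (card (Sig n)) / real n * (1 - d n)
            \<le> measure_pmf.prob (pp_from_random n (E n) (T n)) {I. real (card I) \<ge> real n - h n}"
      using eventually_gt_at_top[of 0]
    proof eventually_elim
      case (elim n)
      have "eps n \<ge> 0" using assms(1) by (simp add: eps_def)
      then have "d n > 0" and "eps n \<le> (d n)\<^sup>2" by (simp_all add: d_def add_nonneg_pos)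
      then show ?case
        using prob_pp_from_random_many_informed_ge[OF graph assms(1) sub elim _ paths, of "d n" "T n"]
        by (simp add: h_def eps_def algebra_simps)
    qed
    show "(\<lambda>n. real (card (Sig n)) / real n * (1 - d n)) \<longlonglongrightarrow> 1"
      using tendsto_mult[OF LIMSEQ_divide_of_nat_1[OF big] tendsto_diff[OF tendsto_const d]] by simp
  qed simp
  moreover have "h \<in> o(\<lambda>n. real n)"
    unfolding h_def[abs_def] using big smallo_of_nat_mult_LIMSEQ_0[OF d] by (rule sum_in_smallo)
  ultimately show ?thesis by blast
qed

theorem lemma2:
  fixes chi tau :: nat
    and E :: "nat \<Rightarrow> nat \<Rightarrow> nat \<Rightarrow> bool"
    and Sig :: "nat \<Rightarrow> nat set"
  assumes "chi > 0" and "tau > 0"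
    and graph: "\<And>n. is_graph n (E n)"
    and sub: "\<And>n. Sig n \<subseteq> {0..<n}"
    and big: "(\<lambda>n. real n - real (card (Sig n))) \<in> o(\<lambda>n. real n)"
    and paths: "\<And>n u v. u \<in> Sig n \<Longrightarrow> v \<in> Sig n \<Longrightarrow>
       \<exists>p. is_path (E n) p u v \<and> length p - 1 \<le> chi \<and>
           (\<forall>i. Suc i < length p \<longrightarrow>
              min (deg n (E n) (p ! i)) (deg n (E n) (p ! Suc i)) \<le> tau)"
  shows "\<exists>h :: nat \<Rightarrow> real. h \<in> o(\<lambda>n. real n) \<and>
     (\<lambda>n. measure_pmf.prob
            (pp_from_random n (E n) (nat \<lceil>6 * real tau * (real chi + ln (real n))\<rceil>))
            {I. real (card I) \<ge> real n - h n})
     \<longlonglongrightarrow> 1"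
proof -
  have "filterlim (\<lambda>n. nat \<lceil>6 * real tau * (real chi + ln (real n))\<rceil> div chi)
          sequentially sequentially"
    using assms(1,2) by (intro filterlim_div_sequentially filterlim_nat_ceiling_mult_ln) simp_all
  from pp_from_random_informs_almost_all[OF assms(2) graph sub big paths this] show ?thesis .
qed

end
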